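(* Let $(n_k,f^{(k)})_{k\ge1}$ be a sequence with $n_k\to\infty$, $f^{(k)}\in\mathcal K$, $\rho(f^{(k)})\to1$ and $\rho(f^{(k)})\ne1$; write $n=n_k$, $\rho=\rho(f^{(k)})$ and evaluate $u,v$ and the law of the process at $f^{(k)}$. Then for all $m,l\in\{1,\dots,d\}$, $$\frac{E(Y_{n,l}\mid Z_0=e_m)}{\frac{1-\rho^{n+1}}{1-\rho}u_mv_l}\to1\qquad(k\to\infty).$$
   Context: Fix $d\ge1$, $X=\mathbb Z_{\ge0}^d$, $C=[0,1]^d$; $s^\alpha=\prod_is_i^{\alpha_i}$. A $d$-type Galton–Watson process $(Z_n)_{n\ge0}$ in $X$ has offspring p.g.f. $f=(f_1,\dots,f_d)'$, $f_k(s)=\sum_{i\in X}p_k(i)s^i$; $Y_n=\sum_{j=0}^nZ_j=(Y_{n,1},\dots,Y_{n,d})'$ is the total progeny. $M=(\partial f_k(\mathbf 1)/\partial s_l)_{k,l}$, $b^k_{lm},c^k_{lmj}$ the second and third partial derivatives of $f_k$ at $\mathbf 1$. For fixed $a,b,c>0$, $U\in\mathbb N$, $\mathcal K=\mathcal K(a,b,c,U)$ is the class of such $f$ with $[M^U]_{kl}\ge a$ for all $k,l$, $\sum b^k_{lm}\ge b$, $\sum c^k_{lmj}\le c$. $\rho$ is the Perron root of $M$, $u,v$ its right and left (column) eigenvectors normalized by $\sum_ku_k=1$, $\sum_ku_kv_k=1$. *)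

theory Defs
  imports "HOL-Probability.Probability"
begin

text \<open>Types are indexed by 0..d-1 (the paper's 1..d shifted). A population vector is a
function nat => nat; only coordinates below d are meaningful.
An offspring law is p :: nat => (nat => nat) pmf, p k the offspring distribution of a
type-k individual (equivalently the p.g.f. f_k).\<close>

definition unitv :: "nat \<Rightarrow> nat \<Rightarrow> nat" where
  "unitv m = (\<lambda>i. if i = m then 1 else 0)"

definition offspring_law :: "nat \<Rightarrow> (nat \<Rightarrow> (nat \<Rightarrow> nat) pmf) \<Rightarrow> bool" where
  "offspring_law d p \<longleftrightarrow> (\<forall>k<d. \<forall>x\<in>set_pmf (p k). \<forall>i\<ge>d. x i = 0)"

text \<open>Mean matrix M_{kl} = df_k/ds_l (1) = E(offspring of type l of a type-k parent).\<close>
definition mean_mat :: "(nat \<Rightarrow> (nat \<Rightarrow> nat) pmf) \<Rightarrow> nat \<Rightarrow> nat \<Rightarrow> real" where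
  "mean_mat p k l = measure_pmf.expectation (p k) (\<lambda>x. real (x l))"

text \<open>Second and third partial derivatives of f_k at 1 (factorial moments), valued in
[0,\<infinity>].\<close>
definition deriv2 :: "(nat \<Rightarrow> (nat \<Rightarrow> nat) pmf) \<Rightarrow> nat \<Rightarrow> nat \<Rightarrow> nat \<Rightarrow> ennreal" where
  "deriv2 p k l m = (\<integral>\<^sup>+ x. ennreal (real (x l * (x m - (if l = m then 1 else 0)))) \<partial>measure_pmf (p k))"

definition deriv3 :: "(nat \<Rightarrow> (nat \<Rightarrow> nat) pmf) \<Rightarrow> nat \<Rightarrow> nat \<Rightarrow> nat \<Rightarrow> nat \<Rightarrow> ennreal" where
  "deriv3 p k l m j = (\<integral>\<^sup>+ x. ennreal (real (x l * (x m - (if l = m then 1 else 0))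
       * (x j - (if l = j then 1 else 0) - (if m = j then 1 else 0)))) \<partial>measure_pmf (p k))"

definition matmul :: "nat \<Rightarrow> (nat \<Rightarrow> nat \<Rightarrow> real) \<Rightarrow> (nat \<Rightarrow> nat \<Rightarrow> real) \<Rightarrow> nat \<Rightarrow> nat \<Rightarrow> real" where
  "matmul d A B = (\<lambda>i j. \<Sum>r<d. A i r * B r j)"

fun matpow :: "nat \<Rightarrow> (nat \<Rightarrow> nat \<Rightarrow> real) \<Rightarrow> nat \<Rightarrow> nat \<Rightarrow> nat \<Rightarrow> real" where
  "matpow d A 0 = (\<lambda>i j. if i = j then 1 else 0)"
| "matpow d A (Suc n) = matmul d (matpow d A n) A"

definition classK :: "nat \<Rightarrow> real \<Rightarrow> real \<Rightarrow> real \<Rightarrow> nat \<Rightarrow> (nat \<Rightarrow> (nat \<Rightarrow> nat) pmf) \<Rightarrow> bool" where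
  "classK d a b c U p \<longleftrightarrow> offspring_law d p
     \<and> (\<forall>k<d. \<forall>l<d. matpow d (mean_mat p) U k l \<ge> a)
     \<and> (\<Sum>k<d. \<Sum>l<d. \<Sum>m<d. deriv2 p k l m) \<ge> ennreal b
     \<and> (\<Sum>k<d. \<Sum>l<d. \<Sum>m<d. \<Sum>j<d. deriv3 p k l m j) \<le> ennreal c"

definition is_eigenvalue :: "nat \<Rightarrow> (nat \<Rightarrow> nat \<Rightarrow> real) \<Rightarrow> complex \<Rightarrow> bool" where
  "is_eigenvalue d A mu \<longleftrightarrow> (\<exists>x :: nat \<Rightarrow> complex. (\<exists>i<d. x i \<noteq> 0) \<and>
      (\<forall>i<d. (\<Sum>j<d. complex_of_real (A i j) * x j) = mu * x i))"

definition perron_root :: "nat \<Rightarrow> (nat \<Rightarrow> nat \<Rightarrow> real) \<Rightarrow> real" where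
  "perron_root d A = Max {cmod mu | mu. is_eigenvalue d A mu}"

fun iid_sum :: "(nat \<Rightarrow> nat) pmf \<Rightarrow> nat \<Rightarrow> (nat \<Rightarrow> nat) pmf" where
  "iid_sum q 0 = return_pmf (\<lambda>_. 0)"
| "iid_sum q (Suc n) = bind_pmf q (\<lambda>x. map_pmf (\<lambda>y i. x i + y i) (iid_sum q n))"

fun gw_step_upto :: "(nat \<Rightarrow> (nat \<Rightarrow> nat) pmf) \<Rightarrow> (nat \<Rightarrow> nat) \<Rightarrow> nat \<Rightarrow> (nat \<Rightarrow> nat) pmf" where
  "gw_step_upto p z 0 = return_pmf (\<lambda>_. 0)"
| "gw_step_upto p z (Suc k) =
     bind_pmf (iid_sum (p k) (z k)) (\<lambda>x. map_pmf (\<lambda>y i. x i + y i) (gw_step_upto p z k))"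

definition gw_step :: "nat \<Rightarrow> (nat \<Rightarrow> (nat \<Rightarrow> nat) pmf) \<Rightarrow> (nat \<Rightarrow> nat) \<Rightarrow> (nat \<Rightarrow> nat) pmf" where
  "gw_step d p z = gw_step_upto p z d"

fun gw_path :: "nat \<Rightarrow> (nat \<Rightarrow> (nat \<Rightarrow> nat) pmf) \<Rightarrow> (nat \<Rightarrow> nat) \<Rightarrow> nat \<Rightarrow> (nat \<Rightarrow> nat) list pmf" where
  "gw_path d p z0 0 = return_pmf [z0]"
| "gw_path d p z0 (Suc n) =
     bind_pmf (gw_path d p z0 n) (\<lambda>zs. map_pmf (\<lambda>z'. zs @ [z']) (gw_step d p (last zs)))"

text \<open>E(Y_{n,l} | Z_0 = e_m), where Y_n = Z_0 + ... + Z_n is the total progeny.\<close>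
definition exp_total_progeny :: "nat \<Rightarrow> (nat \<Rightarrow> (nat \<Rightarrow> nat) pmf) \<Rightarrow> nat \<Rightarrow> nat \<Rightarrow> nat \<Rightarrow> real" where
  "exp_total_progeny d p m n l =
     measure_pmf.expectation (gw_path d p (unitv m) n) (\<lambda>zs. real (\<Sum>z\<leftarrow>zs. z l))"

end

theory Submission
  imports Defs "Jordan_Normal_Form.Spectral_Radius"
begin

(* The expected total progeny is a partial sum of powers of the mean matrix:
   E(Y_{n,l} | Z_0 = e_m) = sum_{j<=n} (M^j)_{ml}.  Uniform primitivity M^U >= a makes the
   Perron vectors u, v positive with u_i, v_i >= a / rho^U, and lets M / rho shrink the
   oscillation of column ratios by the factor 1 - a / rho^U every U steps (a Doeblin
   argument), so that |(M^j)_{ml} - rho^j u_m v_l| <= (rho^U / a) rho^j (1 - a / rho^U)^(j div U).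
   For rho close to 1 these errors have a sum bounded uniformly in k, whereas
   sum_{j<=n} rho^j = (1 - rho^(n+1)) / (1 - rho) tends to infinity; dividing gives the limit 1.
   Positivity of the Perron vectors comes from the Jordan normal form: the powers of M grow
   at most like rho^n times a polynomial, so M |u| >= rho |u| cannot be strict anywhere. *)

section \<open>Powers of matrices given as functions\<close>

definition matvec :: "nat \<Rightarrow> (nat \<Rightarrow> nat \<Rightarrow> real) \<Rightarrow> (nat \<Rightarrow> real) \<Rightarrow> nat \<Rightarrow> real" where
  "matvec d A x = (\<lambda>i. \<Sum>j<d. A i j * x j)"

definition vecmat :: "nat \<Rightarrow> (nat \<Rightarrow> real) \<Rightarrow> (nat \<Rightarrow> nat \<Rightarrow> real) \<Rightarrow> nat \<Rightarrow> real" where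
  "vecmat d x A = (\<lambda>j. \<Sum>i<d. x i * A i j)"

lemma vecmat_eq_matvec_transpose: "vecmat d x A = matvec d (\<lambda>i j. A j i) x"
  by (simp add: vecmat_def matvec_def mult.commute)

lemma matpow_add:
  assumes "j < d"
  shows "matpow d A (m + n) i j = (\<Sum>r<d. matpow d A m i r * matpow d A n r j)"
  using assms
proof (induction n arbitrary: j)
  case 0
  have "(\<Sum>r<d. matpow d A m i r * matpow d A 0 r j) = (\<Sum>r\<in>{j}. matpow d A m i r * matpow d A 0 r j)"
    by (rule sum.mono_neutral_right) (use 0 in auto)
  then show ?case by simp
next
  case (Suc n)
  have "matpow d A (m + Suc n) i j = (\<Sum>s<d. \<Sum>r<d. matpow d A m i r * matpow d A n r s * A s j)"
    using Suc.IH by (simp add: matmul_def sum_distrib_right)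
  also have "\<dots> = (\<Sum>r<d. \<Sum>s<d. matpow d A m i r * matpow d A n r s * A s j)"
    by (rule sum.swap)
  finally show ?case by (simp add: matmul_def sum_distrib_left mult.assoc)
qed

lemma matpow_1: "i < d \<Longrightarrow> matpow d A 1 i j = A i j"
  by (simp add: matmul_def if_distrib[where f = "\<lambda>x. x * _"] sum.delta cong: if_cong)

lemma matpow_Suc_left:
  assumes "i < d" "j < d"
  shows "matpow d A (Suc n) i j = (\<Sum>r<d. A i r * matpow d A n r j)"
proof -
  have "matpow d A (1 + n) i j = (\<Sum>r<d. A i r * matpow d A n r j)"
    unfolding matpow_add[OF assms(2)] using assms(1) matpow_1[of i d A] by simp
  then show ?thesis by simp
qed

lemma matpow_mult:
  assumes "j < d"
  shows "matpow d (matpow d A U) n i j = matpow d A (U * n) i j"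
  using assms
proof (induction n arbitrary: j)
  case (Suc n)
  have "matpow d (matpow d A U) (Suc n) i j = (\<Sum>r<d. matpow d A (U * n) i r * matpow d A U r j)"
    using Suc.IH by (simp add: matmul_def)
  also have "\<dots> = matpow d A (U * Suc n) i j"
    using matpow_add[OF Suc.prems, of A "U * n" U i] by (simp add: add.commute)
  finally show ?case .
qed simp

lemma matpow_transpose:
  assumes "i < d" "j < d"
  shows "matpow d (\<lambda>i j. A j i) n i j = matpow d A n j i"
  using assms
proof (induction n arbitrary: i j)
  case (Suc n)
  have "matpow d (\<lambda>i j. A j i) (Suc n) i j = (\<Sum>r<d. A j r * matpow d A n r i)"
    unfolding matpow.simps matmul_def by (rule sum.cong) (use Suc in \<open>auto simp: mult.commute\<close>)
  then show ?case using matpow_Suc_left[OF Suc.prems(2,1)] by simp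
qed simp

lemma matpow_cmult: "matpow d (\<lambda>i j. c * A i j) n i j = c ^ n * matpow d A n i j"
  by (induction n arbitrary: i j) (auto simp: matmul_def sum_distrib_left mult_ac)

lemma matpow_nonneg: "(\<And>i j. 0 \<le> A i j) \<Longrightarrow> 0 \<le> matpow d A n i j"
  by (induction n arbitrary: i j) (auto simp: matmul_def intro!: sum_nonneg)

lemma matvec_matpow_0: "i < d \<Longrightarrow> matvec d (matpow d A 0) x i = x i"
  by (simp add: matvec_def if_distrib[where f = "\<lambda>y. y * _"] sum.delta cong: if_cong)

lemma matvec_matpow_Suc: "matvec d (matpow d A (Suc n)) x = matvec d (matpow d A n) (matvec d A x)"
proof
  fix i
  have "matvec d (matpow d A (Suc n)) x i = (\<Sum>j<d. \<Sum>r<d. matpow d A n i r * A r j * x j)"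
    by (simp add: matvec_def matmul_def sum_distrib_right)
  also have "\<dots> = (\<Sum>r<d. \<Sum>j<d. matpow d A n i r * A r j * x j)"
    by (rule sum.swap)
  finally show "matvec d (matpow d A (Suc n)) x i = matvec d (matpow d A n) (matvec d A x) i"
    by (simp add: matvec_def sum_distrib_left mult.assoc)
qed

lemma matvec_mono:
  assumes "\<And>j. j < d \<Longrightarrow> 0 \<le> A i j" "\<And>j. j < d \<Longrightarrow> x j \<le> y j"
  shows "matvec d A x i \<le> matvec d A y i"
  unfolding matvec_def by (rule sum_mono) (use assms in \<open>auto intro: mult_left_mono\<close>)

lemma matvec_cong: "(\<And>j. j < d \<Longrightarrow> x j = y j) \<Longrightarrow> matvec d A x i = matvec d A y i"
  unfolding matvec_def by (rule sum.cong) auto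

lemma matvec_cmult: "matvec d A (\<lambda>j. c * x j) i = c * matvec d A x i"
  by (simp add: matvec_def sum_distrib_left mult_ac)

lemma matvec_matpow_eigen:
  assumes "\<And>i. i < d \<Longrightarrow> matvec d A x i = c * x i" "i < d"
  shows "matvec d (matpow d A n) x i = c ^ n * x i"
  using assms(2)
proof (induction n arbitrary: i)
  case (Suc n)
  have "matvec d (matpow d A (Suc n)) x i = matvec d (matpow d A n) (\<lambda>j. c * x j) i"
    unfolding matvec_matpow_Suc by (rule matvec_cong) (rule assms(1))
  also have "\<dots> = c * (c ^ n * x i)"
    unfolding matvec_cmult Suc.IH[OF Suc.prems] ..
  finally show ?case by simp
qed (simp add: matvec_matpow_0 del: matpow.simps)

lemma vecmat_matpow_eigen:
  assumes "\<And>j. j < d \<Longrightarrow> vecmat d x A j = c * x j" "j < d"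
  shows "vecmat d x (matpow d A n) j = c ^ n * x j"
proof -
  have "vecmat d x (matpow d A n) j = matvec d (matpow d (\<lambda>i j. A j i) n) x j"
    unfolding vecmat_def matvec_def
    by (rule sum.cong) (simp_all add: matpow_transpose[OF assms(2)] mult.commute)
  also have "\<dots> = c ^ n * x j"
    by (rule matvec_matpow_eigen) (use assms in \<open>simp_all add: vecmat_eq_matvec_transpose\<close>)
  finally show ?thesis .
qed

lemma matvec_matpow_ge:
  assumes nonneg: "\<And>i j. 0 \<le> A i j" and "0 \<le> c"
    and super: "\<And>i. i < d \<Longrightarrow> c * x i \<le> matvec d A x i" and "i < d"
  shows "c ^ n * x i \<le> matvec d (matpow d A n) x i"
  using assms(4)
proof (induction n arbitrary: i)
  case (Suc n)
  have "c ^ Suc n * x i = c * (c ^ n * x i)"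
    by simp
  also have "\<dots> \<le> c * matvec d (matpow d A n) x i"
    using Suc \<open>0 \<le> c\<close> by (intro mult_left_mono) auto
  also have "\<dots> = matvec d (matpow d A n) (\<lambda>j. c * x j) i"
    by (rule matvec_cmult[symmetric])
  also have "\<dots> \<le> matvec d (matpow d A n) (matvec d A x) i"
    by (rule matvec_mono) (use matpow_nonneg[OF nonneg] super in auto)
  finally show ?case by (simp only: matvec_matpow_Suc)
qed (simp add: matvec_matpow_0 del: matpow.simps)

lemma matvec_ge_sum:
  assumes "\<And>j. j < d \<Longrightarrow> a \<le> B i j" "\<And>j. j < d \<Longrightarrow> 0 \<le> y j"
  shows "a * (\<Sum>j<d. y j) \<le> matvec d B y i"
  unfolding matvec_def sum_distrib_left
  by (rule sum_mono) (simp add: assms mult_right_mono)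

section \<open>Doeblin contraction\<close>

definition ratio_bounds :: "nat \<Rightarrow> (nat \<Rightarrow> real) \<Rightarrow> real \<Rightarrow> real \<Rightarrow> (nat \<Rightarrow> real) \<Rightarrow> bool" where
  "ratio_bounds d u lo hi g \<longleftrightarrow> (\<forall>i<d. lo * u i \<le> g i \<and> g i \<le> hi * u i)"

text \<open>Since \<open>B \<ge> \<alpha>\<close> entrywise and \<open>u\<close> is \<open>B\<close>-harmonic with total mass 1, every coordinate
  of \<open>B g - lo \<cdot> u\<close> is at least \<open>\<alpha>\<close> times the total mass of \<open>g - lo \<cdot> u\<close>; so the oscillation
  \<open>hi - lo\<close> of \<open>g / u\<close> shrinks by the factor \<open>1 - \<alpha>\<close>.\<close>
lemma ratio_bounds_matvec:
  assumes B: "\<And>i j. i < d \<Longrightarrow> j < d \<Longrightarrow> \<alpha> \<le> B i j" and "0 \<le> \<alpha>"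
    and harmonic: "\<And>i. i < d \<Longrightarrow> matvec d B u i = u i"
    and u_sum: "(\<Sum>i<d. u i) = 1" and u_le_1: "\<And>i. i < d \<Longrightarrow> u i \<le> 1"
    and g: "ratio_bounds d u lo hi g"
  shows "ratio_bounds d u (lo + \<alpha> * ((\<Sum>j<d. g j) - lo)) (hi - \<alpha> * (hi - (\<Sum>j<d. g j))) (matvec d B g)"
  unfolding ratio_bounds_def
proof (intro allI impI conjI)
  fix i assume i: "i < d"
  have "matvec d B (\<lambda>j. g j - lo * u j) i = matvec d B g i - lo * matvec d B u i"
    and "matvec d B (\<lambda>j. hi * u j - g j) i = hi * matvec d B u i - matvec d B g i"
    by (simp_all add: matvec_def right_diff_distrib sum_subtractf sum_distrib_left mult_ac)
  moreover have "\<alpha> * (\<Sum>j<d. g j - lo * u j) \<le> matvec d B (\<lambda>j. g j - lo * u j) i"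
    and "\<alpha> * (\<Sum>j<d. hi * u j - g j) \<le> matvec d B (\<lambda>j. hi * u j - g j) i"
    using g i by (auto simp: ratio_bounds_def B intro!: matvec_ge_sum)
  ultimately have lower: "\<alpha> * (\<Sum>j<d. g j - lo * u j) \<le> matvec d B g i - lo * u i"
    and upper: "\<alpha> * (\<Sum>j<d. hi * u j - g j) \<le> hi * u i - matvec d B g i"
    using harmonic[OF i] by simp_all
  have lo_mass: "(\<Sum>j<d. g j - lo * u j) = (\<Sum>j<d. g j) - lo"
    and hi_mass: "(\<Sum>j<d. hi * u j - g j) = hi - (\<Sum>j<d. g j)"
    using u_sum by (simp_all add: sum_subtractf sum_distrib_left[symmetric])
  have "0 \<le> (\<Sum>j<d. g j - lo * u j)" "0 \<le> (\<Sum>j<d. hi * u j - g j)"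
    using g by (auto simp: ratio_bounds_def intro!: sum_nonneg)
  then have "\<alpha> * ((\<Sum>j<d. g j) - lo) * u i \<le> \<alpha> * ((\<Sum>j<d. g j) - lo)"
    and "\<alpha> * (hi - (\<Sum>j<d. g j)) * u i \<le> \<alpha> * (hi - (\<Sum>j<d. g j))"
    using u_le_1[OF i] \<open>0 \<le> \<alpha>\<close> lo_mass hi_mass by (simp_all add: mult_left_le)
  then show "(lo + \<alpha> * ((\<Sum>j<d. g j) - lo)) * u i \<le> matvec d B g i"
    and "matvec d B g i \<le> (hi - \<alpha> * (hi - (\<Sum>j<d. g j))) * u i"
    using lower upper lo_mass hi_mass by (simp_all add: algebra_simps)
qed

lemma matpow_column_ratio_bounds:
  assumes nonneg: "\<And>i j. i < d \<Longrightarrow> j < d \<Longrightarrow> 0 \<le> A i j"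
    and harmonic: "\<And>i. i < d \<Longrightarrow> matvec d A u i = u i"
    and u_pos: "\<And>i. i < d \<Longrightarrow> 0 < u i" and u_sum: "(\<Sum>i<d. u i) = 1"
    and primitive: "\<And>i j. i < d \<Longrightarrow> j < d \<Longrightarrow> \<alpha> \<le> matpow d A U i j"
    and "0 \<le> \<alpha>" "\<alpha> \<le> 1" and "l < d"
  obtains lo hi where "ratio_bounds d u lo hi (\<lambda>i. matpow d A n i l)"
    and "hi - lo \<le> (1 - \<alpha>) ^ (n div U) / u l"
proof -
  define col where "col n = (\<lambda>i. matpow d A n i l)" for n
  define osc_bounded where "osc_bounded n q \<longleftrightarrow> (\<exists>lo hi. ratio_bounds d u lo hi (col n) \<and> hi - lo \<le> (1 - \<alpha>) ^ q / u l)"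
    for n q
  have u_le_1: "u i \<le> 1" if "i < d" for i
    using member_le_sum[of i "{..<d}" u] u_pos that u_sum by (simp add: less_imp_le)
  have col_add: "col (m + n) = matvec d (matpow d A m) (col n)" for m n
    using matpow_add[OF \<open>l < d\<close>] by (simp add: col_def matvec_def)
  have power_harmonic: "matvec d (matpow d A k) u i = u i" if "i < d" for k i
    using matvec_matpow_eigen[of d A u 1 i k] harmonic that by simp
  have U_steps: "osc_bounded (U + n) (Suc q)" if "osc_bounded n q" for n q
  proof -
    from that obtain lo hi where b: "ratio_bounds d u lo hi (col n)"
      and w: "hi - lo \<le> (1 - \<alpha>) ^ q / u l" unfolding osc_bounded_def by blast
    have "(1 - \<alpha>) * (hi - lo) \<le> (1 - \<alpha>) ^ Suc q / u l"
      using mult_left_mono[OF w, of "1 - \<alpha>"] \<open>\<alpha> \<le> 1\<close> by simp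
    with ratio_bounds_matvec[OF primitive \<open>0 \<le> \<alpha>\<close> power_harmonic u_sum u_le_1 b] show ?thesis
      unfolding osc_bounded_def col_add by (intro exI conjI) (auto simp: algebra_simps)
  qed
  have one_step: "osc_bounded (Suc n) q" if "osc_bounded n q" for n q
  proof -
    have nonneg1: "0 \<le> matpow d A 1 i j" if "i < d" "j < d" for i j
      by (simp only: matpow_1[OF that(1)] nonneg[OF that])
    have "ratio_bounds d u lo hi (col (1 + n))" if "ratio_bounds d u lo hi (col n)" for lo hi
      using ratio_bounds_matvec[OF nonneg1 order_refl power_harmonic u_sum u_le_1 that]
      unfolding col_add by simp
    with \<open>osc_bounded n q\<close> show ?thesis unfolding osc_bounded_def by auto
  qed
  have "ratio_bounds d u 0 (1 / u l) (col 0)"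
    unfolding ratio_bounds_def col_def
    using u_pos[OF \<open>l < d\<close>] by (auto simp: u_pos less_imp_le)
  then have "osc_bounded 0 0"
    unfolding osc_bounded_def by force
  then have "osc_bounded (U * q) q" for q
    by (induction q) (simp_all add: U_steps)
  then have "osc_bounded (U * q + r) q" for q r
    by (induction r) (simp_all add: one_step)
  then have "osc_bounded n (n div U)"
    by (metis div_mult_mod_eq mult.commute)
  then show ?thesis using that unfolding osc_bounded_def col_def by blast
qed

lemma matpow_doeblin_bound:
  assumes nonneg: "\<And>i j. i < d \<Longrightarrow> j < d \<Longrightarrow> 0 \<le> A i j"
    and right: "\<And>i. i < d \<Longrightarrow> matvec d A u i = u i"
    and left: "\<And>j. j < d \<Longrightarrow> vecmat d v A j = v j"
    and u_pos: "\<And>i. i < d \<Longrightarrow> 0 < u i" and v_nonneg: "\<And>i. i < d \<Longrightarrow> 0 \<le> v i"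
    and u_sum: "(\<Sum>i<d. u i) = 1" and uv_sum: "(\<Sum>i<d. u i * v i) = 1"
    and primitive: "\<And>i j. i < d \<Longrightarrow> j < d \<Longrightarrow> \<alpha> \<le> matpow d A U i j"
    and "0 \<le> \<alpha>" "\<alpha> \<le> 1" and m: "m < d" and l: "l < d"
  shows "\<bar>matpow d A n m l - u m * v l\<bar> \<le> (1 - \<alpha>) ^ (n div U) / u l"
proof -
  obtain lo hi where b: "\<And>i. i < d \<Longrightarrow> lo * u i \<le> matpow d A n i l \<and> matpow d A n i l \<le> hi * u i"
    and w: "hi - lo \<le> (1 - \<alpha>) ^ (n div U) / u l"
    using matpow_column_ratio_bounds[OF nonneg right u_pos u_sum primitive \<open>0 \<le> \<alpha>\<close> \<open>\<alpha> \<le> 1\<close> l]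
    unfolding ratio_bounds_def by blast
  have "v l = (\<Sum>i<d. v i * matpow d A n i l)"
    using vecmat_matpow_eigen[of d v A 1 l n] left l by (simp add: vecmat_def)
  moreover have "(\<Sum>i<d. v i * (lo * u i)) \<le> (\<Sum>i<d. v i * matpow d A n i l)"
    and "(\<Sum>i<d. v i * matpow d A n i l) \<le> (\<Sum>i<d. v i * (hi * u i))"
    using b v_nonneg by (auto intro!: sum_mono mult_left_mono)
  ultimately have "lo \<le> v l" "v l \<le> hi"
    using uv_sum by (simp_all add: sum_distrib_left[symmetric] mult_ac)
  moreover have "0 < u m" "u m \<le> 1"
    using member_le_sum[of m "{..<d}" u] u_pos u_sum m by (auto simp: less_imp_le)
  ultimately have "u m * lo \<le> u m * v l" "u m * v l \<le> u m * hi"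
    by (simp_all add: mult_left_mono)
  moreover have "u m * lo \<le> matpow d A n m l" "matpow d A n m l \<le> u m * hi"
    using b[OF m] by (simp_all add: mult.commute)
  ultimately have "\<bar>matpow d A n m l - u m * v l\<bar> \<le> u m * (hi - lo)"
    unfolding abs_le_iff right_diff_distrib by linarith
  also have "\<dots> \<le> hi - lo"
    using \<open>0 < u m\<close> \<open>u m \<le> 1\<close> \<open>lo \<le> v l\<close> \<open>v l \<le> hi\<close> by (simp add: mult_left_le_one_le)
  finally show ?thesis using w by linarith
qed

section \<open>Perron vectors of a primitive matrix\<close>

definition complex_mat :: "nat \<Rightarrow> (nat \<Rightarrow> nat \<Rightarrow> real) \<Rightarrow> complex mat" where
  "complex_mat d M = mat d d (\<lambda>(i, j). complex_of_real (M i j))"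

lemma complex_mat_carrier: "complex_mat d M \<in> carrier_mat d d"
  by (simp add: complex_mat_def)

lemma complex_mat_mult_vec:
  "i < d \<Longrightarrow> dim_vec w = d \<Longrightarrow> (complex_mat d M *\<^sub>v w) $ i = (\<Sum>j<d. complex_of_real (M i j) * w $ j)"
  by (simp add: complex_mat_def scalar_prod_def lessThan_atLeast0)

lemma is_eigenvalue_iff_eigenvalue: "is_eigenvalue d M \<mu> \<longleftrightarrow> eigenvalue (complex_mat d M) \<mu>"
proof
  assume "is_eigenvalue d M \<mu>"
  then obtain x where nz: "\<exists>i<d. x i \<noteq> 0"
    and eq: "\<And>i. i < d \<Longrightarrow> (\<Sum>j<d. complex_of_real (M i j) * x j) = \<mu> * x i"
    unfolding is_eigenvalue_def by blast
  have "eigenvector (complex_mat d M) (vec d x) \<mu>"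
    unfolding eigenvector_def
  proof (intro conjI)
    show "complex_mat d M *\<^sub>v vec d x = \<mu> \<cdot>\<^sub>v vec d x"
    proof (rule eq_vecI)
      fix i assume "i < dim_vec (\<mu> \<cdot>\<^sub>v vec d x)"
      then have i: "i < d" by simp
      show "(complex_mat d M *\<^sub>v vec d x) $ i = (\<mu> \<cdot>\<^sub>v vec d x) $ i"
        using complex_mat_mult_vec[OF i, of "vec d x" M] eq[OF i] i by simp
    qed (simp add: complex_mat_def)
  qed (use nz in \<open>auto simp: complex_mat_def vec_eq_iff\<close>)
  then show "eigenvalue (complex_mat d M) \<mu>"
    unfolding eigenvalue_def by blast
next
  assume "eigenvalue (complex_mat d M) \<mu>"
  then obtain w where w: "eigenvector (complex_mat d M) w \<mu>"
    unfolding eigenvalue_def by blast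
  then have dim: "dim_vec w = d" and nz: "\<exists>i<d. w $ i \<noteq> 0"
    by (auto simp: eigenvector_def complex_mat_def vec_eq_iff)
  have "(\<Sum>j<d. complex_of_real (M i j) * w $ j) = \<mu> * w $ i" if "i < d" for i
    using w that dim by (simp add: eigenvector_def complex_mat_mult_vec[symmetric])
  with nz show "is_eigenvalue d M \<mu>"
    unfolding is_eigenvalue_def by blast
qed

lemma perron_root_eq_spectral_radius: "perron_root d M = spectral_radius (complex_mat d M)"
proof -
  have "{cmod \<mu> | \<mu>. is_eigenvalue d M \<mu>} = norm ` spectrum (complex_mat d M)"
    by (auto simp: spectrum_def is_eigenvalue_iff_eigenvalue)
  then show ?thesis
    by (simp add: perron_root_def spectral_radius_def)
qed

lemma norm_eigenvalue_le_perron_root: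
  "0 < d \<Longrightarrow> is_eigenvalue d M \<mu> \<Longrightarrow> cmod \<mu> \<le> perron_root d M"
  unfolding perron_root_eq_spectral_radius
  by (rule spectral_radius_mem_max(2)[OF complex_mat_carrier])
    (auto simp: spectrum_def is_eigenvalue_iff_eigenvalue)

lemma complex_mat_pow:
  "i < d \<Longrightarrow> j < d \<Longrightarrow> (complex_mat d M ^\<^sub>m k) $$ (i, j) = complex_of_real (matpow d M k i j)"
proof (induction k arbitrary: i j)
  case (Suc k)
  have "complex_mat d M ^\<^sub>m k \<in> carrier_mat d d"
    by (rule pow_carrier_mat[OF complex_mat_carrier])
  then have "(complex_mat d M ^\<^sub>m Suc k) $$ (i, j)
      = (\<Sum>r<d. (complex_mat d M ^\<^sub>m k) $$ (i, r) * complex_mat d M $$ (r, j))"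
    using Suc.prems by (simp add: scalar_prod_def lessThan_atLeast0 complex_mat_def)
  also have "\<dots> = (\<Sum>r<d. complex_of_real (matpow d M k i r) * complex_of_real (M r j))"
    by (rule sum.cong) (use Suc in \<open>auto simp: complex_mat_def\<close>)
  finally show ?case by (simp add: matmul_def)
qed (simp add: complex_mat_def)

text \<open>The Jordan normal form of \<open>M / \<rho>\<close> bounds its powers polynomially.\<close>
lemma matpow_growth_bound:
  assumes "0 < d" and \<rho>_pos: "0 < perron_root d M"
  obtains c1 c2 where "\<And>k i j. i < d \<Longrightarrow> j < d \<Longrightarrow>
    \<bar>matpow d M k i j\<bar> \<le> perron_root d M ^ k * (c1 + c2 * real k ^ (d - 1))"
proof -
  define \<rho> where "\<rho> = perron_root d M"
  define N where "N = (\<lambda>i j. (1 / \<rho>) * M i j)"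
  have "spectral_radius (complex_mat d N) \<le> 1"
  proof -
    obtain \<mu> where sr: "spectral_radius (complex_mat d N) = cmod \<mu>" and "is_eigenvalue d N \<mu>"
      using spectral_radius_mem_max(1)[OF complex_mat_carrier \<open>0 < d\<close>, of N]
      by (auto simp: spectrum_def is_eigenvalue_iff_eigenvalue)
    then obtain x where nz: "\<exists>i<d. x i \<noteq> 0"
      and eq: "\<And>i. i < d \<Longrightarrow> (\<Sum>j<d. complex_of_real (N i j) * x j) = \<mu> * x i"
      unfolding is_eigenvalue_def by blast
    have "(\<Sum>j<d. complex_of_real (M i j) * x j) = complex_of_real \<rho> * \<mu> * x i" if "i < d" for i
    proof -
      have "(\<Sum>j<d. complex_of_real (M i j) * x j)
          = complex_of_real \<rho> * (\<Sum>j<d. complex_of_real (N i j) * x j)"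
        using \<rho>_pos by (simp add: N_def \<rho>_def sum_distrib_left)
      then show ?thesis using eq[OF that] by simp
    qed
    with nz have "is_eigenvalue d M (complex_of_real \<rho> * \<mu>)"
      unfolding is_eigenvalue_def by blast
    from norm_eigenvalue_le_perron_root[OF \<open>0 < d\<close> this]
    have "\<rho> * cmod \<mu> \<le> \<rho>"
      using \<rho>_pos by (simp add: \<rho>_def norm_mult)
    then show ?thesis using sr \<rho>_pos by (simp add: \<rho>_def)
  qed
  then obtain c1 c2 where bound: "\<And>k. norm_bound (complex_mat d N ^\<^sub>m k) (c1 + c2 * real k ^ (d - 1))"
    using spectral_radius_jnf_norm_bound_le_1_upper_triangular[OF complex_mat_carrier] by blast
  have "\<bar>matpow d M k i j\<bar> \<le> \<rho> ^ k * (c1 + c2 * real k ^ (d - 1))" if "i < d" "j < d" for k i j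
  proof -
    have "\<bar>matpow d N k i j\<bar> \<le> c1 + c2 * real k ^ (d - 1)"
      using bound[of k] pow_carrier_mat[OF complex_mat_carrier] complex_mat_pow[OF that] that
      unfolding norm_bound_def by (metis carrier_matD norm_of_real)
    moreover have "matpow d N k i j = matpow d M k i j / \<rho> ^ k"
      unfolding N_def matpow_cmult by (simp add: power_one_over)
    ultimately show ?thesis
      using \<rho>_pos by (simp add: \<rho>_def abs_div pos_divide_le_eq mult.commute)
  qed
  then show ?thesis using that unfolding \<rho>_def by blast
qed

lemma power_exceeds_polynomial:
  fixes r C D :: real
  assumes "1 < r"
  obtains j where "C + D * real j ^ p < r ^ j"
proof -
  have ln_r: "0 < ln r" using assms by simp
  have "filterlim (\<lambda>j. real j * ln r) at_top sequentially"
    using filterlim_tendsto_pos_mult_at_top[OF tendsto_const ln_r filterlim_real_sequentially]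
    by (simp add: mult.commute)
  from filterlim_compose[OF tendsto_power_div_exp_0 this]
  have "(\<lambda>j. ln r ^ p * (real j ^ p / r ^ j)) \<longlonglongrightarrow> 0"
  proof (rule Lim_transform_eventually[OF _ always_eventually], intro allI)
    fix j
    have "exp (real j * ln r) = r ^ j"
      using assms by (simp add: exp_of_nat_mult)
    then show "(real j * ln r) ^ p / exp (real j * ln r) = ln r ^ p * (real j ^ p / r ^ j)"
      by (simp add: power_mult_distrib)
  qed
  then have "(\<lambda>j. (1 / ln r ^ p) * (ln r ^ p * (real j ^ p / r ^ j))) \<longlonglongrightarrow> (1 / ln r ^ p) * 0"
    by (intro tendsto_mult tendsto_const)
  then have "(\<lambda>j. real j ^ p / r ^ j) \<longlonglongrightarrow> 0"
    using ln_r by simp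
  moreover have "(\<lambda>j. 1 / r ^ j) \<longlonglongrightarrow> 0"
    using LIMSEQ_inverse_realpow_zero[of r] assms by (simp add: divide_inverse)
  ultimately have "(\<lambda>j. C * (1 / r ^ j) + D * (real j ^ p / r ^ j)) \<longlonglongrightarrow> C * 0 + D * 0"
    by (intro tendsto_intros)
  then have "\<forall>\<^sub>F j in sequentially. C * (1 / r ^ j) + D * (real j ^ p / r ^ j) < 1"
    using order_tendstoD(2)[of _ "C * 0 + D * 0" sequentially 1] by simp
  then obtain j where "C * (1 / r ^ j) + D * (real j ^ p / r ^ j) < 1"
    by (auto simp: eventually_sequentially)
  then have "(C + D * real j ^ p) / r ^ j < 1"
    by (simp add: add_divide_distrib)
  then show ?thesis
    using that assms by (simp add: divide_less_eq)
qed

lemma no_expanding_positive_vector: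
  assumes nonneg: "\<And>i j. 0 \<le> B i j"
    and growth: "\<And>n i j. i < d \<Longrightarrow> j < d \<Longrightarrow> \<bar>matpow d B n i j\<bar> \<le> r ^ n * (c1 + c2 * real n ^ p)"
    and "0 < r" "0 < \<epsilon>"
    and y_pos: "\<And>i. i < d \<Longrightarrow> 0 < y i" and "i0 < d"
    and expanding: "\<And>i. i < d \<Longrightarrow> (r + \<epsilon>) * y i \<le> matvec d B y i"
  shows False
proof -
  define Y where "Y = (\<Sum>j<d. y j)"
  have "((r + \<epsilon>) / r) ^ n \<le> Y / y i0 * c1 + Y / y i0 * c2 * real n ^ p" for n
  proof -
    have "(r + \<epsilon>) ^ n * y i0 \<le> matvec d (matpow d B n) y i0"
      by (rule matvec_matpow_ge[OF nonneg _ expanding \<open>i0 < d\<close>]) (use assms in simp)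
    also have "\<dots> \<le> (\<Sum>j<d. r ^ n * (c1 + c2 * real n ^ p) * y j)"
      unfolding matvec_def
    proof (rule sum_mono)
      fix j assume "j \<in> {..<d}"
      then have "matpow d B n i0 j \<le> r ^ n * (c1 + c2 * real n ^ p)"
        using growth[of i0 j n] \<open>i0 < d\<close> by simp
      then show "matpow d B n i0 j * y j \<le> r ^ n * (c1 + c2 * real n ^ p) * y j"
        using y_pos \<open>j \<in> {..<d}\<close> by (simp add: mult_right_mono)
    qed
    also have "\<dots> = r ^ n * ((c1 + c2 * real n ^ p) * Y)"
      by (simp add: Y_def sum_distrib_left mult.assoc)
    finally have "((r + \<epsilon>) / r) ^ n * y i0 \<le> (c1 + c2 * real n ^ p) * Y"
      using \<open>0 < r\<close> by (simp add: power_divide field_simps)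
    then show ?thesis
      using y_pos[OF \<open>i0 < d\<close>] by (simp add: pos_le_divide_eq field_simps)
  qed
  moreover have "1 < (r + \<epsilon>) / r"
    using \<open>0 < r\<close> \<open>0 < \<epsilon>\<close> by simp
  then obtain n where "Y / y i0 * c1 + Y / y i0 * c2 * real n ^ p < ((r + \<epsilon>) / r) ^ n"
    by (rule power_exceeds_polynomial)
  ultimately show False by (meson not_le)
qed

lemma primitive_strictly_superharmonic_expands:
  assumes primitive: "\<And>i j. i < d \<Longrightarrow> j < d \<Longrightarrow> a \<le> B i j" and "0 < a"
    and x_nonneg: "\<And>j. 0 \<le> x j" and super: "\<And>j. j < d \<Longrightarrow> r * x j \<le> matvec d B x j"
    and "i < d" and strict: "r * x i < matvec d B x i"
  obtains \<epsilon> where "0 < \<epsilon>" "\<And>j. j < d \<Longrightarrow> 0 < matvec d B x j"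
    and "\<And>j. j < d \<Longrightarrow> (r + \<epsilon>) * matvec d B x j \<le> matvec d B (matvec d B x) j"
proof -
  define y where "y = matvec d B x"
  define z where "z j = y j - r * x j" for j
  have z_nonneg: "0 \<le> z j" if "j < d" for j
    using super[OF that] by (simp add: z_def y_def)
  have z_mass: "0 < (\<Sum>j<d. z j)"
    using strict z_nonneg \<open>i < d\<close> by (intro sum_pos2[of _ i]) (simp_all add: z_def y_def)
  obtain k where "k < d" "x k \<noteq> 0"
  proof (rule ccontr)
    assume "\<not> thesis"
    with that have "x k = 0" if "k < d" for k
      using that by blast
    with strict \<open>i < d\<close> show False by (simp add: matvec_def)
  qed
  then have "0 < a * (\<Sum>j<d. x j)"
    using x_nonneg \<open>0 < a\<close> by (simp add: sum_pos2 order.not_eq_order_implies_strict)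
  moreover have "a * (\<Sum>j<d. x j) \<le> y j" if "j < d" for j
    unfolding y_def by (rule matvec_ge_sum) (use primitive that x_nonneg in auto)
  ultimately have y_pos: "0 < y j" if "j < d" for j
    using that by (meson less_le_trans)
  define Y where "Y = (\<Sum>j<d. y j)"
  have y_le: "y j \<le> Y" if "j < d" for j
    using member_le_sum[of j "{..<d}" y] y_pos that by (simp add: Y_def less_imp_le)
  have "0 < Y"
    using y_pos[OF \<open>i < d\<close>] y_le[OF \<open>i < d\<close>] by linarith
  define \<epsilon> where "\<epsilon> = a * (\<Sum>j<d. z j) / Y"
  have "0 < \<epsilon>"
    using \<open>0 < a\<close> z_mass \<open>0 < Y\<close> by (simp add: \<epsilon>_def)
  have "(r + \<epsilon>) * y j \<le> matvec d B y j" if "j < d" for j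
  proof -
    have "matvec d B z j = matvec d B y j - r * y j"
      by (simp add: z_def y_def matvec_def sum_subtractf right_diff_distrib sum_distrib_left mult_ac)
    moreover have "\<epsilon> * y j \<le> a * (\<Sum>j<d. z j)"
      using mult_left_mono[OF y_le[OF that], of \<epsilon>] \<open>0 < \<epsilon>\<close> \<open>0 < Y\<close> by (simp add: \<epsilon>_def)
    moreover have "a * (\<Sum>j<d. z j) \<le> matvec d B z j"
      by (rule matvec_ge_sum) (use primitive that z_nonneg in auto)
    ultimately show ?thesis
      by (simp add: distrib_right)
  qed
  with \<open>0 < \<epsilon>\<close> y_pos show ?thesis
    using that unfolding y_def by blast
qed

text \<open>If \<open>M x \<ge> \<rho> x\<close> held strictly somewhere, then \<open>M\<^sup>U\<close> would expand the positive vector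
  \<open>M\<^sup>U x\<close> by a factor \<open>> \<rho>\<^sup>U\<close>, contradicting the growth bound.\<close>
lemma primitive_superharmonic_harmonic:
  assumes nonneg: "\<And>i j. 0 \<le> M i j"
    and primitive: "\<And>i j. i < d \<Longrightarrow> j < d \<Longrightarrow> a \<le> matpow d M U i j" and "0 < a" and "0 < \<rho>"
    and growth: "\<And>n i j. i < d \<Longrightarrow> j < d \<Longrightarrow> \<bar>matpow d M n i j\<bar> \<le> \<rho> ^ n * (c1 + c2 * real n ^ p)"
    and x_nonneg: "\<And>i. 0 \<le> x i" and super: "\<And>i. i < d \<Longrightarrow> \<rho> * x i \<le> matvec d M x i"
    and "i < d"
  shows "matvec d (matpow d M U) x i = \<rho> ^ U * x i"
proof (rule ccontr)
  define B where "B = matpow d M U"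
  have B_super: "\<rho> ^ U * x j \<le> matvec d B x j" if "j < d" for j
    unfolding B_def using matvec_matpow_ge[OF nonneg _ super that] \<open>0 < \<rho>\<close> by simp
  assume "matvec d (matpow d M U) x i \<noteq> \<rho> ^ U * x i"
  with B_super[OF \<open>i < d\<close>] have "\<rho> ^ U * x i < matvec d B x i"
    by (simp add: B_def)
  then obtain \<epsilon> where "0 < \<epsilon>" and pos: "\<And>j. j < d \<Longrightarrow> 0 < matvec d B x j"
    and expanding: "\<And>j. j < d \<Longrightarrow> (\<rho> ^ U + \<epsilon>) * matvec d B x j \<le> matvec d B (matvec d B x) j"
    using primitive_strictly_superharmonic_expands[of d a B x "\<rho> ^ U" i] primitive \<open>0 < a\<close>
      x_nonneg B_super \<open>i < d\<close> by (auto simp: B_def)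
  have "\<bar>matpow d B n j k\<bar> \<le> (\<rho> ^ U) ^ n * (c1 + c2 * real U ^ p * real n ^ p)" if "j < d" "k < d" for n j k
    using growth[OF that, of "U * n"] matpow_mult[OF that(2), of M U n j]
    by (simp add: B_def power_mult power_mult_distrib mult.assoc)
  moreover have "0 \<le> B j k" for j k
    unfolding B_def by (rule matpow_nonneg[OF nonneg])
  ultimately show False
    using no_expanding_positive_vector[of B d "\<rho> ^ U" c1 "c2 * real U ^ p" p \<epsilon> "matvec d B x" i]
      expanding pos \<open>0 < \<rho>\<close> \<open>0 < \<epsilon>\<close> \<open>i < d\<close> by simp
qed

lemma primitive_eigenvector_pos:
  assumes primitive: "\<And>i j. i < d \<Longrightarrow> j < d \<Longrightarrow> a \<le> B i j" and "0 < a" "0 < r"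
    and nonneg: "\<And>j. j < d \<Longrightarrow> 0 \<le> w j"
    and eigen: "\<And>i. i < d \<Longrightarrow> matvec d B w i = r * w i"
    and "j0 < d" "w j0 \<noteq> 0" and "i < d"
  shows "0 < w i"
proof -
  have "0 < (\<Sum>j<d. w j)"
    using nonneg \<open>j0 < d\<close> \<open>w j0 \<noteq> 0\<close> by (intro sum_pos2[of _ j0]) (simp_all add: order.not_eq_order_implies_strict)
  then have "0 < a * (\<Sum>j<d. w j)" using \<open>0 < a\<close> by simp
  also have "\<dots> \<le> r * w i"
    using matvec_ge_sum[of d a B i w] primitive nonneg eigen[OF \<open>i < d\<close>] \<open>i < d\<close> by simp
  finally show ?thesis using \<open>0 < r\<close> by (simp add: zero_less_mult_iff)
qed

lemma primitive_eigenvector_sign: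
  assumes nonneg: "\<And>i j. 0 \<le> M i j"
    and primitive: "\<And>i j. i < d \<Longrightarrow> j < d \<Longrightarrow> a \<le> matpow d M U i j" and "0 < a" and "0 < \<rho>"
    and growth: "\<And>n i j. i < d \<Longrightarrow> j < d \<Longrightarrow> \<bar>matpow d M n i j\<bar> \<le> \<rho> ^ n * (c1 + c2 * real n ^ p)"
    and eigen: "\<And>i. i < d \<Longrightarrow> matvec d M y i = \<rho> * y i" and "i0 < d" "y i0 \<noteq> 0"
  shows "(\<forall>i<d. 0 < y i) \<or> (\<forall>i<d. y i < 0)"
proof -
  define x where "x i = \<bar>y i\<bar>" for i
  have super: "\<rho> * x i \<le> matvec d M x i" if "i < d" for i
  proof -
    have "\<rho> * x i = \<bar>\<Sum>j<d. M i j * y j\<bar>"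
      using eigen[OF that] \<open>0 < \<rho>\<close> by (simp add: x_def matvec_def abs_mult)
    also have "\<dots> \<le> matvec d M x i"
      using sum_abs[of "\<lambda>j. M i j * y j" "{..<d}"] nonneg by (simp add: matvec_def x_def abs_mult)
    finally show ?thesis .
  qed
  have x_nonneg: "0 \<le> x i" for i
    by (simp add: x_def)
  have x_harmonic: "matvec d (matpow d M U) x i = \<rho> ^ U * x i" if "i < d" for i
    by (rule primitive_superharmonic_harmonic[OF nonneg primitive \<open>0 < a\<close> \<open>0 < \<rho>\<close> growth x_nonneg super that])
  have x_pos: "0 < x i" if "i < d" for i
    using primitive_eigenvector_pos[OF primitive \<open>0 < a\<close> _ _ x_harmonic \<open>i0 < d\<close> _ that]
      \<open>0 < \<rho>\<close> \<open>y i0 \<noteq> 0\<close> by (simp add: x_def)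
  define w where "w i = x i + y i" for i
  have w_harmonic: "matvec d (matpow d M U) w i = \<rho> ^ U * w i" if "i < d" for i
    using x_harmonic[OF that] matvec_matpow_eigen[OF eigen that, of U]
    by (simp add: w_def matvec_def sum.distrib algebra_simps)
  show ?thesis
  proof (cases "\<exists>j<d. w j \<noteq> 0")
    case True
    then obtain j where "j < d" "w j \<noteq> 0" by blast
    then have w_pos: "0 < w i" if "i < d" for i
      using primitive_eigenvector_pos[OF primitive \<open>0 < a\<close> _ _ w_harmonic \<open>j < d\<close> _ that] \<open>0 < \<rho>\<close>
      by (simp add: w_def x_def)
    then have "0 < y i" if "i < d" for i
      using w_pos[OF that] by (simp add: w_def x_def abs_if split: if_splits)
    then show ?thesis by blast
  next
    case False
    then have "y i < 0" if "i < d" for i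
      using x_pos[OF that] that by (auto simp: w_def x_def)
    then show ?thesis by blast
  qed
qed

locale perron_vectors =
  fixes d U :: nat and a :: real and M :: "nat \<Rightarrow> nat \<Rightarrow> real" and u v :: "nat \<Rightarrow> real"
  assumes nonneg: "\<And>i j. 0 \<le> M i j"
    and primitive: "\<And>i j. i < d \<Longrightarrow> j < d \<Longrightarrow> a \<le> matpow d M U i j" and a_pos: "0 < a"
    and root_pos: "0 < perron_root d M"
    and right_eigen: "\<And>i. i < d \<Longrightarrow> (\<Sum>j<d. M i j * u j) = perron_root d M * u i"
    and left_eigen: "\<And>j. j < d \<Longrightarrow> (\<Sum>i<d. v i * M i j) = perron_root d M * v j"
    and u_sum: "(\<Sum>i<d. u i) = 1" and uv_sum: "(\<Sum>i<d. u i * v i) = 1"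
begin

abbreviation \<rho> where "\<rho> \<equiv> perron_root d M"

lemma dim_pos: "0 < d"
  using u_sum by (cases d) auto

lemma u_pos: "i < d \<Longrightarrow> 0 < u i"
proof -
  obtain c1 c2 where growth: "\<And>n i j. i < d \<Longrightarrow> j < d \<Longrightarrow> \<bar>matpow d M n i j\<bar> \<le> \<rho> ^ n * (c1 + c2 * real n ^ (d - 1))"
    using matpow_growth_bound[OF dim_pos root_pos] by blast
  obtain i0 where "i0 < d" "u i0 \<noteq> 0"
    using u_sum by (metis lessThan_iff sum.neutral zero_neq_one)
  moreover have "matvec d M u i = \<rho> * u i" if "i < d" for i
    using right_eigen[OF that] by (simp add: matvec_def)
  ultimately have "(\<forall>i<d. 0 < u i) \<or> (\<forall>i<d. u i < 0)"
    using primitive_eigenvector_sign[OF nonneg primitive a_pos root_pos growth] by blast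
  moreover have "\<not> (\<forall>i<d. u i < 0)"
    using sum_pos[of "{..<d}" "\<lambda>i. - u i"] dim_pos u_sum by (auto simp: sum_negf)
  ultimately show "i < d \<Longrightarrow> 0 < u i" by blast
qed

lemma v_pos: "j < d \<Longrightarrow> 0 < v j"
proof -
  obtain c1 c2 where growth: "\<And>n i j. i < d \<Longrightarrow> j < d \<Longrightarrow> \<bar>matpow d M n i j\<bar> \<le> \<rho> ^ n * (c1 + c2 * real n ^ (d - 1))"
    using matpow_growth_bound[OF dim_pos root_pos] by blast
  have growth_T: "\<bar>matpow d (\<lambda>i j. M j i) n i j\<bar> \<le> \<rho> ^ n * (c1 + c2 * real n ^ (d - 1))"
    if "i < d" "j < d" for n i j
    unfolding matpow_transpose[OF that] by (rule growth[OF that(2,1)])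
  have primitive_T: "a \<le> matpow d (\<lambda>i j. M j i) U i j" if "i < d" "j < d" for i j
    unfolding matpow_transpose[OF that] by (rule primitive[OF that(2,1)])
  have eigen_T: "matvec d (\<lambda>i j. M j i) v j = \<rho> * v j" if "j < d" for j
    using left_eigen[OF that] by (simp add: matvec_def mult.commute)
  obtain i0 where "i0 < d" "v i0 \<noteq> 0"
  proof (rule ccontr)
    assume "\<not> thesis"
    with that have "v i = 0" if "i < d" for i
      using that by blast
    then have "(\<Sum>i<d. u i * v i) = 0" by simp
    with uv_sum show False by simp
  qed
  from primitive_eigenvector_sign[OF nonneg primitive_T a_pos root_pos growth_T eigen_T this]
  have "(\<forall>i<d. 0 < v i) \<or> (\<forall>i<d. v i < 0)" .
  moreover have "\<not> (\<forall>i<d. v i < 0)"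
  proof
    assume "\<forall>i<d. v i < 0"
    then have "0 < (\<Sum>i<d. - (u i * v i))"
      using dim_pos u_pos by (intro sum_pos) (auto intro: mult_pos_neg)
    with uv_sum show False by (simp add: sum_negf)
  qed
  ultimately show "j < d \<Longrightarrow> 0 < v j" by blast
qed

lemma u_le_1: "i < d \<Longrightarrow> u i \<le> 1"
  using member_le_sum[of i "{..<d}" u] u_pos u_sum by (simp add: less_imp_le)

lemma u_lower: "i < d \<Longrightarrow> a \<le> \<rho> ^ U * u i"
proof -
  assume "i < d"
  have "a * (\<Sum>j<d. u j) \<le> matvec d (matpow d M U) u i"
    by (rule matvec_ge_sum) (use primitive \<open>i < d\<close> u_pos in \<open>auto simp: less_imp_le\<close>)
  also have "\<dots> = \<rho> ^ U * u i"
    by (rule matvec_matpow_eigen[OF _ \<open>i < d\<close>]) (simp add: matvec_def right_eigen)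
  finally show ?thesis using u_sum by simp
qed

lemma v_lower: "j < d \<Longrightarrow> a \<le> \<rho> ^ U * v j"
proof -
  assume "j < d"
  have "(\<Sum>i<d. u i * v i) \<le> (\<Sum>i<d. v i)"
    using u_le_1 v_pos by (intro sum_mono) (simp add: mult_left_le_one_le less_imp_le)
  then have "a \<le> a * (\<Sum>i<d. v i)"
    using uv_sum a_pos by simp
  also have "\<dots> \<le> (\<Sum>i<d. v i * matpow d M U i j)"
    unfolding sum_distrib_left
    by (intro sum_mono) (use primitive \<open>j < d\<close> v_pos in \<open>auto simp: mult.commute less_imp_le intro: mult_left_mono\<close>)
  also have "\<dots> = \<rho> ^ U * v j"
    using vecmat_matpow_eigen[OF _ \<open>j < d\<close>, of v M \<rho> U] left_eigen by (simp add: vecmat_def)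
  finally show ?thesis .
qed

lemma a_le_root_power: "a \<le> \<rho> ^ U"
proof -
  have "\<rho> ^ U * u 0 \<le> \<rho> ^ U"
    using u_le_1[OF dim_pos] root_pos by (simp add: mult_left_le)
  then show ?thesis
    using u_lower[OF dim_pos] by linarith
qed

lemma matpow_approx:
  assumes "m < d" "l < d"
  shows "\<bar>matpow d M n m l - \<rho> ^ n * (u m * v l)\<bar> \<le> \<rho> ^ n * (1 - a / \<rho> ^ U) ^ (n div U) / u l"
proof -
  define A where "A i j = (1 / \<rho>) * M i j" for i j
  have A_pow: "matpow d A k i j = matpow d M k i j / \<rho> ^ k" for k i j
    unfolding A_def[abs_def] matpow_cmult by (simp add: power_one_over)
  have "a / \<rho> ^ U \<le> 1"
    using a_le_root_power root_pos by simp
  have "\<bar>matpow d A n m l - u m * v l\<bar> \<le> (1 - a / \<rho> ^ U) ^ (n div U) / u l"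
  proof (rule matpow_doeblin_bound[OF _ _ _ u_pos _ u_sum uv_sum _ _ \<open>a / \<rho> ^ U \<le> 1\<close> assms])
    show "0 \<le> A i j" for i j
      using nonneg root_pos by (simp add: A_def)
    show "matvec d A u i = u i" if "i < d" for i
      using right_eigen[OF that] root_pos by (simp add: A_def matvec_def sum_divide_distrib[symmetric])
    show "vecmat d v A j = v j" if "j < d" for j
      using left_eigen[OF that] root_pos
      by (simp add: A_def vecmat_def sum_divide_distrib[symmetric])
    show "0 \<le> v i" if "i < d" for i
      using v_pos[OF that] by simp
    show "a / \<rho> ^ U \<le> matpow d A U i j" if "i < d" "j < d" for i j
      using primitive[OF that] root_pos by (simp add: A_pow divide_right_mono)
    show "0 \<le> a / \<rho> ^ U"
      using a_pos root_pos by simp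
  qed
  then have "\<rho> ^ n * \<bar>matpow d A n m l - u m * v l\<bar> \<le> \<rho> ^ n * ((1 - a / \<rho> ^ U) ^ (n div U) / u l)"
    by (rule mult_left_mono) (use root_pos in simp)
  moreover have "matpow d M n m l - \<rho> ^ n * (u m * v l) = \<rho> ^ n * (matpow d A n m l - u m * v l)"
    using root_pos by (simp add: A_pow right_diff_distrib)
  ultimately show ?thesis
    using root_pos by (simp add: abs_mult)
qed

lemma u_lower_uniform: "\<rho> \<le> R \<Longrightarrow> i < d \<Longrightarrow> a / R ^ U \<le> u i"
proof -
  assume "\<rho> \<le> R" "i < d"
  have "a \<le> R ^ U * u i"
    using u_lower[OF \<open>i < d\<close>] mult_right_mono[OF power_mono[OF \<open>\<rho> \<le> R\<close>, of U] less_imp_le[OF u_pos[OF \<open>i < d\<close>]]]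
      root_pos by simp
  then show ?thesis
    using root_pos \<open>\<rho> \<le> R\<close> by (simp add: divide_le_eq mult.commute)
qed

lemma v_lower_uniform: "\<rho> \<le> R \<Longrightarrow> j < d \<Longrightarrow> a / R ^ U \<le> v j"
proof -
  assume "\<rho> \<le> R" "j < d"
  have "a \<le> R ^ U * v j"
    using v_lower[OF \<open>j < d\<close>] mult_right_mono[OF power_mono[OF \<open>\<rho> \<le> R\<close>, of U] less_imp_le[OF v_pos[OF \<open>j < d\<close>]]]
      root_pos by simp
  then show ?thesis
    using root_pos \<open>\<rho> \<le> R\<close> by (simp add: divide_le_eq mult.commute)
qed

lemma primitivity_le_uniform: "\<rho> \<le> R \<Longrightarrow> a / R ^ U \<le> 1"
  using u_lower_uniform[OF _ dim_pos] u_le_1[OF dim_pos] by (rule order_trans)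

lemma uv_lower_uniform:
  assumes "\<rho> \<le> R" "m < d" "l < d"
  shows "(a / R ^ U) ^ 2 \<le> u m * v l"
proof -
  have "0 \<le> a / R ^ U"
    using a_pos root_pos assms(1) by simp
  then show ?thesis
    using mult_mono[OF u_lower_uniform[OF assms(1,2)] v_lower_uniform[OF assms(1,3)]] u_pos[OF assms(2)]
    by (simp add: power2_eq_square)
qed

lemma partial_sum_approx:
  assumes "\<rho> \<le> R" "m < d" "l < d"
  shows "\<bar>(\<Sum>j\<le>n. matpow d M j m l) - (\<Sum>j\<le>n. \<rho> ^ j) * (u m * v l)\<bar>
    \<le> R ^ U / a * (\<Sum>j\<le>n. \<rho> ^ j * (1 - a / R ^ U) ^ (j div U))"
proof -
  have "0 < R" using root_pos assms(1) by linarith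
  have "a / R ^ U \<le> a / \<rho> ^ U"
    using a_pos root_pos assms(1) by (simp add: frac_le power_mono)
  moreover have "a / \<rho> ^ U \<le> 1"
    using a_le_root_power root_pos by simp
  ultimately have \<theta>: "0 \<le> 1 - a / \<rho> ^ U" "1 - a / \<rho> ^ U \<le> 1 - a / R ^ U"
    by simp_all
  then have "0 \<le> 1 - a / R ^ U" by linarith
  have inv_u: "1 / u l \<le> R ^ U / a"
    using u_lower_uniform[OF assms(1,3)] u_pos[OF \<open>l < d\<close>] a_pos \<open>0 < R\<close>
    by (simp add: divide_simps mult.commute)
  have "\<bar>(\<Sum>j\<le>n. matpow d M j m l) - (\<Sum>j\<le>n. \<rho> ^ j) * (u m * v l)\<bar>
      = \<bar>\<Sum>j\<le>n. matpow d M j m l - \<rho> ^ j * (u m * v l)\<bar>"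
    by (simp add: sum_subtractf sum_distrib_right)
  also have "\<dots> \<le> (\<Sum>j\<le>n. \<bar>matpow d M j m l - \<rho> ^ j * (u m * v l)\<bar>)"
    by (rule sum_abs)
  also have "\<dots> \<le> (\<Sum>j\<le>n. R ^ U / a * (\<rho> ^ j * (1 - a / R ^ U) ^ (j div U)))"
  proof (rule sum_mono)
    fix j
    have "\<rho> ^ j * (1 - a / \<rho> ^ U) ^ (j div U) * (1 / u l) \<le> \<rho> ^ j * (1 - a / R ^ U) ^ (j div U) * (R ^ U / a)"
      using \<theta> \<open>0 \<le> 1 - a / R ^ U\<close> inv_u root_pos u_pos[OF \<open>l < d\<close>]
      by (intro mult_mono mult_left_mono power_mono) simp_all
    then show "\<bar>matpow d M j m l - \<rho> ^ j * (u m * v l)\<bar> \<le> R ^ U / a * (\<rho> ^ j * (1 - a / R ^ U) ^ (j div U))"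
      using matpow_approx[OF \<open>m < d\<close> \<open>l < d\<close>, of j] by (simp add: mult.commute)
  qed
  finally show ?thesis
    by (simp add: sum_distrib_left)
qed

end

section \<open>Mean of the total progeny\<close>

definition mean_nn :: "(nat \<Rightarrow> (nat \<Rightarrow> nat) pmf) \<Rightarrow> nat \<Rightarrow> nat \<Rightarrow> ennreal" where
  "mean_nn p k l = (\<integral>\<^sup>+ x. of_nat (x l) \<partial>measure_pmf (p k))"

lemma nn_integral_pmf_const: "(\<integral>\<^sup>+ x. c \<partial>measure_pmf q) = c"
  by (simp add: measure_pmf.emeasure_space_1)

lemma iid_sum_mean:
  "(\<integral>\<^sup>+ y. of_nat (y l) \<partial>measure_pmf (iid_sum q n)) = of_nat n * (\<integral>\<^sup>+ x. of_nat (x l) \<partial>measure_pmf q)"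
proof (induction n)
  case (Suc n)
  have "(\<integral>\<^sup>+ y. of_nat (y l) \<partial>measure_pmf (iid_sum q (Suc n)))
      = (\<integral>\<^sup>+ x. (\<integral>\<^sup>+ y. of_nat (x l) + of_nat (y l) \<partial>measure_pmf (iid_sum q n)) \<partial>measure_pmf q)"
    by (simp add: nn_integral_bind_pmf nn_integral_map_pmf)
  also have "\<dots> = (\<integral>\<^sup>+ x. of_nat (x l) + of_nat n * (\<integral>\<^sup>+ x. of_nat (x l) \<partial>measure_pmf q) \<partial>measure_pmf q)"
    by (simp add: nn_integral_add nn_integral_pmf_const Suc.IH)
  also have "\<dots> = (\<integral>\<^sup>+ x. of_nat (x l) \<partial>measure_pmf q) + of_nat n * (\<integral>\<^sup>+ x. of_nat (x l) \<partial>measure_pmf q)"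
    by (simp add: nn_integral_add nn_integral_pmf_const)
  finally show ?case by (simp add: algebra_simps)
qed (simp add: nn_integral_return_pmf)

lemma gw_step_upto_mean:
  "(\<integral>\<^sup>+ y. of_nat (y l) \<partial>measure_pmf (gw_step_upto p z k)) = (\<Sum>i<k. of_nat (z i) * mean_nn p i l)"
proof (induction k)
  case (Suc k)
  have "(\<integral>\<^sup>+ y. of_nat (y l) \<partial>measure_pmf (gw_step_upto p z (Suc k)))
      = (\<integral>\<^sup>+ x. (\<integral>\<^sup>+ y. of_nat (x l) + of_nat (y l) \<partial>measure_pmf (gw_step_upto p z k))
          \<partial>measure_pmf (iid_sum (p k) (z k)))"
    by (simp add: nn_integral_bind_pmf nn_integral_map_pmf)
  also have "\<dots> = (\<integral>\<^sup>+ x. of_nat (x l) + (\<Sum>i<k. of_nat (z i) * mean_nn p i l) \<partial>measure_pmf (iid_sum (p k) (z k)))"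
    by (simp add: nn_integral_add nn_integral_pmf_const Suc.IH)
  also have "\<dots> = of_nat (z k) * mean_nn p k l + (\<Sum>i<k. of_nat (z i) * mean_nn p i l)"
    by (simp add: nn_integral_add nn_integral_pmf_const iid_sum_mean mean_nn_def)
  finally show ?case by (simp add: algebra_simps)
qed (simp add: nn_integral_return_pmf)

definition generation_mean :: "nat \<Rightarrow> (nat \<Rightarrow> (nat \<Rightarrow> nat) pmf) \<Rightarrow> (nat \<Rightarrow> nat) \<Rightarrow> nat \<Rightarrow> nat \<Rightarrow> ennreal" where
  "generation_mean d p start n i = (\<integral>\<^sup>+ zs. of_nat (last zs i) \<partial>measure_pmf (gw_path d p start n))"

lemma generation_mean_0: "generation_mean d p start 0 i = of_nat (start i)"
  by (simp add: generation_mean_def nn_integral_return_pmf)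

lemma generation_mean_Suc:
  "generation_mean d p start (Suc n) l = (\<Sum>i<d. generation_mean d p start n i * mean_nn p i l)"
proof -
  have "generation_mean d p start (Suc n) l
      = (\<integral>\<^sup>+ zs. (\<integral>\<^sup>+ z'. of_nat (z' l) \<partial>measure_pmf (gw_step d p (last zs))) \<partial>measure_pmf (gw_path d p start n))"
    by (simp add: generation_mean_def nn_integral_bind_pmf nn_integral_map_pmf)
  also have "\<dots> = (\<integral>\<^sup>+ zs. (\<Sum>i<d. of_nat (last zs i) * mean_nn p i l) \<partial>measure_pmf (gw_path d p start n))"
    by (simp add: gw_step_def gw_step_upto_mean)
  also have "\<dots> = (\<Sum>i<d. generation_mean d p start n i * mean_nn p i l)"
    by (simp add: generation_mean_def nn_integral_sum nn_integral_multc)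
  finally show ?thesis .
qed

lemma total_progeny_mean:
  "(\<integral>\<^sup>+ zs. of_nat (\<Sum>z\<leftarrow>zs. z l) \<partial>measure_pmf (gw_path d p start n)) = (\<Sum>j\<le>n. generation_mean d p start j l)"
proof (induction n)
  case (Suc n)
  have "(\<integral>\<^sup>+ zs. of_nat (\<Sum>z\<leftarrow>zs. z l) \<partial>measure_pmf (gw_path d p start (Suc n)))
     = (\<integral>\<^sup>+ zs. of_nat (\<Sum>z\<leftarrow>zs. z l) + (\<integral>\<^sup>+ z'. of_nat (z' l) \<partial>measure_pmf (gw_step d p (last zs)))
          \<partial>measure_pmf (gw_path d p start n))"
    by (simp add: nn_integral_bind_pmf nn_integral_map_pmf nn_integral_add nn_integral_pmf_const)
  also have "\<dots> = (\<integral>\<^sup>+ zs. of_nat (\<Sum>z\<leftarrow>zs. z l) \<partial>measure_pmf (gw_path d p start n)) + generation_mean d p start (Suc n) l"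
    by (simp add: nn_integral_add generation_mean_def nn_integral_bind_pmf nn_integral_map_pmf)
  finally show ?case using Suc.IH by simp
qed (simp add: nn_integral_return_pmf generation_mean_0)

lemma le_falling_cube: "(n::nat) \<le> 2 + n * (n - 1) * (n - 1 - 1)"
proof (cases "n \<le> 2")
  case False
  then have "n * 1 * 1 \<le> n * (n - 1) * (n - 1 - 1)"
    by (intro mult_le_mono) auto
  then have "n \<le> n * (n - 1) * (n - 1 - 1)" by simp
  then show ?thesis by linarith
qed auto

lemma mean_nn_le_deriv3: "mean_nn p k l \<le> 2 + deriv3 p k l l l"
proof -
  have "mean_nn p k l \<le> (\<integral>\<^sup>+ x. 2 + ennreal (real (x l * (x l - 1) * (x l - 1 - 1))) \<partial>measure_pmf (p k))"
    unfolding mean_nn_def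
  proof (rule nn_integral_mono)
    fix x :: "nat \<Rightarrow> nat"
    have "real (x l) \<le> 2 + real (x l * (x l - 1) * (x l - 1 - 1))"
      using le_falling_cube[of "x l"] by linarith
    then show "of_nat (x l) \<le> 2 + ennreal (real (x l * (x l - 1) * (x l - 1 - 1)))"
      by (metis ennreal_leI ennreal_numeral ennreal_of_nat_eq_real_of_nat ennreal_plus of_nat_0_le_iff zero_le_numeral)
  qed
  also have "\<dots> = 2 + deriv3 p k l l l"
    by (simp add: nn_integral_add nn_integral_pmf_const deriv3_def)
  finally show ?thesis .
qed

lemma classK_mean_finite:
  assumes "classK d a b c U p" "k < d" "l < d"
  shows "mean_nn p k l < \<top>"
proof -
  have "deriv3 p k l l l \<le> (\<Sum>j<d. deriv3 p k l l j)"
    by (rule member_le_sum) (use assms in auto)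
  also have "\<dots> \<le> (\<Sum>m<d. \<Sum>j<d. deriv3 p k l m j)"
    by (rule member_le_sum[where f = "\<lambda>m. \<Sum>j<d. deriv3 p k l m j"]) (use assms in auto)
  also have "\<dots> \<le> (\<Sum>l<d. \<Sum>m<d. \<Sum>j<d. deriv3 p k l m j)"
    by (rule member_le_sum[where f = "\<lambda>l. \<Sum>m<d. \<Sum>j<d. deriv3 p k l m j"]) (use assms in auto)
  also have "\<dots> \<le> (\<Sum>k<d. \<Sum>l<d. \<Sum>m<d. \<Sum>j<d. deriv3 p k l m j)"
    by (rule member_le_sum[where f = "\<lambda>k. \<Sum>l<d. \<Sum>m<d. \<Sum>j<d. deriv3 p k l m j"]) (use assms in auto)
  also have "\<dots> \<le> ennreal c"
    using assms(1) by (simp add: classK_def)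
  finally have "2 + deriv3 p k l l l < \<top>"
    by (simp add: ennreal_less_top order_le_less_trans[of _ "ennreal c"])
  then show ?thesis
    using mean_nn_le_deriv3 by (rule le_less_trans[rotated])
qed

lemma mean_nn_eq_mean_mat: "mean_nn p k l < \<top> \<Longrightarrow> mean_nn p k l = ennreal (mean_mat p k l)"
proof -
  assume "mean_nn p k l < \<top>"
  have "mean_mat p k l = enn2real (\<integral>\<^sup>+ x. ennreal (real (x l)) \<partial>measure_pmf (p k))"
    unfolding mean_mat_def by (rule integral_eq_nn_integral) auto
  also have "\<dots> = enn2real (mean_nn p k l)"
    by (simp add: mean_nn_def ennreal_of_nat_eq_real_of_nat)
  finally show ?thesis
    using \<open>mean_nn p k l < \<top>\<close> by (simp add: ennreal_enn2real_if)
qed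

lemma mean_mat_nonneg: "0 \<le> mean_mat p k l"
  by (simp add: mean_mat_def)

lemma exp_total_progeny_eq_sum_matpow:
  assumes finite: "\<And>k l. k < d \<Longrightarrow> l < d \<Longrightarrow> mean_nn p k l < \<top>" and "l < d"
  shows "exp_total_progeny d p m n l = (\<Sum>j\<le>n. matpow d (mean_mat p) j m l)"
proof -
  have nonneg: "0 \<le> matpow d (mean_mat p) j m i" for j i
    by (rule matpow_nonneg[OF mean_mat_nonneg])
  have generation: "generation_mean d p (unitv m) j i = ennreal (matpow d (mean_mat p) j m i)"
    if "i < d" for j i
    using that
  proof (induction j arbitrary: i)
    case (Suc j)
    have "generation_mean d p (unitv m) (Suc j) i
        = (\<Sum>r<d. ennreal (matpow d (mean_mat p) j m r * mean_mat p r i))"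
      using Suc finite by (simp add: generation_mean_Suc mean_nn_eq_mean_mat ennreal_mult nonneg mean_mat_nonneg)
    also have "\<dots> = ennreal (matpow d (mean_mat p) (Suc j) m i)"
      by (simp add: matmul_def sum_ennreal nonneg mean_mat_nonneg)
    finally show ?case .
  qed (simp add: generation_mean_0 unitv_def)
  have "exp_total_progeny d p m n l
      = enn2real (\<integral>\<^sup>+ zs. ennreal (real (\<Sum>z\<leftarrow>zs. z l)) \<partial>measure_pmf (gw_path d p (unitv m) n))"
    unfolding exp_total_progeny_def by (rule integral_eq_nn_integral) auto
  also have "\<dots> = enn2real (\<Sum>j\<le>n. ennreal (matpow d (mean_mat p) j m l))"
    using total_progeny_mean[where start = "unitv m"] generation[OF \<open>l < d\<close>]
    by (simp add: ennreal_of_nat_eq_real_of_nat)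
  also have "\<dots> = (\<Sum>j\<le>n. matpow d (mean_mat p) j m l)"
    by (simp add: sum_ennreal nonneg sum_nonneg)
  finally show ?thesis .
qed

lemma classK_perron_vectors:
  assumes "classK d a b c U p" "0 < a" "0 < perron_root d (mean_mat p)"
    and "\<And>i. i < d \<Longrightarrow> (\<Sum>j<d. mean_mat p i j * u j) = perron_root d (mean_mat p) * u i"
    and "\<And>j. j < d \<Longrightarrow> (\<Sum>i<d. v i * mean_mat p i j) = perron_root d (mean_mat p) * v j"
    and "(\<Sum>i<d. u i) = 1" "(\<Sum>i<d. u i * v i) = 1"
  shows "perron_vectors d U a (mean_mat p) u v"
proof (rule perron_vectors.intro)
  show "a \<le> matpow d (mean_mat p) U i j" if "i < d" "j < d" for i j
    using assms(1) that by (simp add: classK_def)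
qed (simp_all add: mean_mat_nonneg assms(2-7))

lemma exp_total_progeny_approx:
  assumes "classK d a b c U p" "perron_vectors d U a (mean_mat p) u v"
    and "perron_root d (mean_mat p) \<le> R" "m < d" "l < d"
  shows "\<bar>exp_total_progeny d p m n l - (\<Sum>j\<le>n. perron_root d (mean_mat p) ^ j) * (u m * v l)\<bar>
    \<le> R ^ U / a * (\<Sum>j\<le>n. perron_root d (mean_mat p) ^ j * (1 - a / R ^ U) ^ (j div U))"
  using perron_vectors.partial_sum_approx[OF assms(2-5)]
    exp_total_progeny_eq_sum_matpow[OF classK_mean_finite[OF assms(1)] assms(5)] by simp

section \<open>Asymptotics\<close>

lemma power_div_le_geometric:
  fixes \<theta> :: real
  assumes "0 \<le> \<theta>" "\<theta> < 1" "0 < U"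
  obtains \<beta> C where "0 < \<beta>" "\<beta> < 1" "\<And>j. \<theta> ^ (j div U) \<le> C * \<beta> ^ j"
proof -
  define \<theta>' where "\<theta>' = (1 + \<theta>) / 2"
  define \<beta> where "\<beta> = root U \<theta>'"
  have \<theta>': "0 < \<theta>'" "\<theta>' < 1" "\<theta> \<le> \<theta>'"
    using assms by (simp_all add: \<theta>'_def)
  have \<beta>: "0 < \<beta>" "\<beta> < 1" "\<beta> ^ U = \<theta>'"
    using \<theta>' \<open>0 < U\<close> by (simp_all add: \<beta>_def real_root_pow_pos)
  have "\<theta> ^ (j div U) \<le> (1 / \<theta>') * \<beta> ^ j" for j
  proof -
    have "\<theta> ^ (j div U) \<le> \<theta>' ^ (j div U)"
      using assms \<theta>' by (intro power_mono) simp_all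
    also have "\<theta>' ^ (j div U) * \<theta>' \<le> \<theta>' ^ (j div U) * \<beta> ^ (j mod U)"
      using \<beta> \<theta>' \<open>0 < U\<close> power_decreasing[of "j mod U" U \<beta>] by (intro mult_left_mono) simp_all
    also have "\<dots> = \<beta> ^ j"
      unfolding \<beta>(3)[symmetric] power_mult[symmetric] power_add[symmetric] by simp
    finally show ?thesis
      using \<theta>'(1) by (simp add: pos_le_divide_eq)
  qed
  with \<beta> show ?thesis using that by blast
qed

lemma weighted_geometric_sums_bounded:
  fixes r :: "nat \<Rightarrow> real"
  assumes "r \<longlonglongrightarrow> 1" "0 \<le> \<theta>" "\<theta> < 1" "0 < U"
  obtains K where "\<forall>\<^sub>F k in sequentially. \<forall>n. (\<Sum>j\<le>n. r k ^ j * \<theta> ^ (j div U)) \<le> K"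
proof -
  obtain \<beta> C where \<beta>: "0 < \<beta>" "\<beta> < 1" and C: "\<And>j. \<theta> ^ (j div U) \<le> C * \<beta> ^ j"
    using power_div_le_geometric[OF assms(2-4)] by blast
  have "0 \<le> C" using C[of 0] by simp
  define \<gamma> where "\<gamma> = (1 + \<beta>) / 2"
  have \<gamma>: "\<beta> < \<gamma>" "\<gamma> < 1" using \<beta> by (simp_all add: \<gamma>_def)
  have "\<forall>\<^sub>F k in sequentially. 0 < r k \<and> r k < \<gamma> / \<beta>"
    using \<beta> \<gamma> by (intro eventually_conj order_tendstoD[OF assms(1)]) simp_all
  then have "\<forall>\<^sub>F k in sequentially. \<forall>n. (\<Sum>j\<le>n. r k ^ j * \<theta> ^ (j div U)) \<le> C / (1 - \<gamma>)"
  proof (rule eventually_mono, intro allI)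
    fix k n assume r: "0 < r k \<and> r k < \<gamma> / \<beta>"
    then have "r k * \<beta> \<le> \<gamma>" using \<beta> by (simp add: pos_less_divide_eq)
    have "(\<Sum>j\<le>n. r k ^ j * \<theta> ^ (j div U)) \<le> (\<Sum>j\<le>n. C * \<gamma> ^ j)"
    proof (rule sum_mono)
      fix j
      have "r k ^ j * \<theta> ^ (j div U) \<le> r k ^ j * (C * \<beta> ^ j)"
        using C r by (intro mult_left_mono) simp_all
      also have "\<dots> = C * (r k * \<beta>) ^ j" by (simp add: power_mult_distrib)
      also have "\<dots> \<le> C * \<gamma> ^ j"
        using \<open>r k * \<beta> \<le> \<gamma>\<close> r \<beta> \<open>0 \<le> C\<close> by (intro mult_left_mono power_mono) simp_all
      finally show "r k ^ j * \<theta> ^ (j div U) \<le> C * \<gamma> ^ j" .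
    qed
    also have "\<dots> = C * (1 - \<gamma> ^ Suc n) / (1 - \<gamma>)"
      using \<gamma> by (simp add: sum_distrib_left[symmetric] sum_gp0)
    also have "\<dots> \<le> C / (1 - \<gamma>)"
      using \<gamma> \<beta> \<open>0 \<le> C\<close> by (intro divide_right_mono) (simp_all add: mult_left_le)
    finally show "(\<Sum>j\<le>n. r k ^ j * \<theta> ^ (j div U)) \<le> C / (1 - \<gamma>)" .
  qed
  then show ?thesis by (rule that)
qed

lemma geometric_sums_tendsto_top:
  fixes r :: "nat \<Rightarrow> real" and N :: "nat \<Rightarrow> nat"
  assumes N: "filterlim N at_top sequentially" and r: "r \<longlonglongrightarrow> 1"
  shows "filterlim (\<lambda>k. \<Sum>j\<le>N k. r k ^ j) at_top sequentially"
  unfolding filterlim_at_top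
proof
  fix Z :: real
  define n where "n = nat \<lceil>2 * Z\<rceil>"
  have "\<forall>\<^sub>F k in sequentially. n \<le> N k"
    using N unfolding filterlim_at_top by blast
  moreover have "\<forall>\<^sub>F k in sequentially. 1 / 2 < r k ^ n"
    using order_tendstoD(1)[OF tendsto_power[OF r, of n], of "1 / 2"] by simp
  moreover have "\<forall>\<^sub>F k in sequentially. 0 < r k"
    using order_tendstoD(1)[OF r, of 0] by simp
  ultimately show "\<forall>\<^sub>F k in sequentially. Z \<le> (\<Sum>j\<le>N k. r k ^ j)"
  proof eventually_elim
    case (elim k)
    have "1 / 2 \<le> r k ^ j" if "j \<le> n" for j
    proof (cases "1 \<le> r k")
      case False
      then have "r k ^ n \<le> r k ^ j" using elim that by (intro power_decreasing) auto
      then show ?thesis using elim by simp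
    next
      case True
      then show ?thesis using one_le_power[OF True, of j] by linarith
    qed
    then have "(\<Sum>j\<le>n. 1 / 2) \<le> (\<Sum>j\<le>n. r k ^ j)"
      by (intro sum_mono) simp
    also have "\<dots> \<le> (\<Sum>j\<le>N k. r k ^ j)"
      using elim by (intro sum_mono2) auto
    finally show ?case
      using real_nat_ceiling_ge[of "2 * Z"] by (simp add: n_def)
  qed
qed

lemma ratio_tendsto_1_of_bounded_error:
  fixes E S D :: "nat \<Rightarrow> real"
  assumes S: "filterlim S at_top sequentially"
    and error: "\<forall>\<^sub>F k in sequentially. \<bar>E k - S k * D k\<bar> \<le> K"
    and "0 < \<delta>" and D: "\<forall>\<^sub>F k in sequentially. \<delta> \<le> D k"
  shows "(\<lambda>k. E k / (S k * D k)) \<longlonglongrightarrow> 1"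
proof -
  have "\<forall>\<^sub>F k in sequentially. 1 \<le> S k"
    using S unfolding filterlim_at_top by blast
  with error D have "\<forall>\<^sub>F k in sequentially. norm (E k / (S k * D k) - 1) \<le> K / \<delta> * inverse (S k)"
  proof eventually_elim
    case (elim k)
    then have "0 < S k" "0 < D k" "0 < S k * \<delta>" "S k * \<delta> \<le> S k * D k"
      using \<open>0 < \<delta>\<close> by simp_all
    then have "\<bar>E k - S k * D k\<bar> / (S k * D k) \<le> K / (S k * \<delta>)"
      using elim by (intro frac_le) auto
    moreover have "E k / (S k * D k) - 1 = (E k - S k * D k) / (S k * D k)"
      using \<open>0 < S k\<close> \<open>0 < D k\<close> by (simp add: diff_divide_distrib)
    moreover have "K / (S k * \<delta>) = K / \<delta> * inverse (S k)"
      by (simp add: divide_inverse)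
    ultimately show ?case
      using \<open>0 < S k * \<delta>\<close> \<open>S k * \<delta> \<le> S k * D k\<close> by (simp add: abs_divide)
  qed
  moreover have "(\<lambda>k. K / \<delta> * inverse (S k)) \<longlonglongrightarrow> 0"
    by (intro tendsto_mult_right_zero tendsto_inverse_0_at_top S)
  ultimately have "(\<lambda>k. E k / (S k * D k) - 1) \<longlonglongrightarrow> 0"
    by (rule Lim_null_comparison)
  then show ?thesis by (rule LIM_zero_cancel)
qed

theorem lemma15:
  fixes d U :: nat and a b c :: real
    and nn :: "nat \<Rightarrow> nat"
    and f :: "nat \<Rightarrow> nat \<Rightarrow> (nat \<Rightarrow> nat) pmf"
    and u v :: "nat \<Rightarrow> nat \<Rightarrow> real"
  assumes "d \<ge> 1" and "a > 0" and "b > 0" and "c > 0" and "U \<ge> 1"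
    and "filterlim nn at_top sequentially"
    and "\<And>k. classK d a b c U (f k)"
    and "(\<lambda>k. perron_root d (mean_mat (f k))) \<longlonglongrightarrow> 1"
    and "\<And>k. perron_root d (mean_mat (f k)) \<noteq> 1"
    and "\<And>k i. i < d \<Longrightarrow> (\<Sum>j<d. mean_mat (f k) i j * u k j) = perron_root d (mean_mat (f k)) * u k i"
    and "\<And>k j. j < d \<Longrightarrow> (\<Sum>i<d. v k i * mean_mat (f k) i j) = perron_root d (mean_mat (f k)) * v k j"
    and "\<And>k. (\<Sum>i<d. u k i) = 1"
    and "\<And>k. (\<Sum>i<d. u k i * v k i) = 1"
    and "m < d" and "l < d"
  shows "(\<lambda>k. exp_total_progeny d (f k) m (nn k) l /
            ((1 - perron_root d (mean_mat (f k)) ^ (nn k + 1)) / (1 - perron_root d (mean_mat (f k)))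
              * u k m * v k l)) \<longlonglongrightarrow> 1"
proof -
  define \<rho> where "\<rho> k = perron_root d (mean_mat (f k))" for k
  define \<alpha> where "\<alpha> = a / 2 ^ U"
  have \<rho>_lim: "\<rho> \<longlonglongrightarrow> 1"
    using assms(8) by (simp add: \<rho>_def[abs_def])
  have "\<forall>\<^sub>F k in sequentially. 0 < \<rho> k" "\<forall>\<^sub>F k in sequentially. \<rho> k < 2"
    using order_tendstoD[OF \<rho>_lim, of 0] order_tendstoD[OF \<rho>_lim, of 2] by simp_all
  then have near_1: "\<forall>\<^sub>F k in sequentially. 0 < \<rho> k \<and> \<rho> k \<le> 2"
    by eventually_elim simp
  have perron: "perron_vectors d U a (mean_mat (f k)) (u k) (v k)" if "0 < \<rho> k" for k
    using classK_perron_vectors[OF assms(7,2) _ assms(10-13)] that by (simp add: \<rho>_def)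
  obtain k0 where "0 < \<rho> k0" "\<rho> k0 \<le> 2"
    using eventually_happens[OF near_1] by auto
  then have "0 \<le> 1 - \<alpha>"
    using perron_vectors.primitivity_le_uniform[OF perron] by (simp add: \<alpha>_def \<rho>_def)
  have "0 < \<alpha>" "1 - \<alpha> < 1" "0 < U"
    using assms(2,5) by (simp_all add: \<alpha>_def)
  then obtain K where K: "\<forall>\<^sub>F k in sequentially. \<forall>n. (\<Sum>j\<le>n. \<rho> k ^ j * (1 - \<alpha>) ^ (j div U)) \<le> K"
    using weighted_geometric_sums_bounded[OF \<rho>_lim \<open>0 \<le> 1 - \<alpha>\<close>] by blast
  have "\<forall>\<^sub>F k in sequentially.
      \<bar>exp_total_progeny d (f k) m (nn k) l - (\<Sum>j\<le>nn k. \<rho> k ^ j) * (u k m * v k l)\<bar> \<le> 2 ^ U / a * K"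
    using near_1 K
  proof eventually_elim
    case (elim k)
    have "\<bar>exp_total_progeny d (f k) m (nn k) l - (\<Sum>j\<le>nn k. \<rho> k ^ j) * (u k m * v k l)\<bar>
        \<le> 2 ^ U / a * (\<Sum>j\<le>nn k. \<rho> k ^ j * (1 - \<alpha>) ^ (j div U))"
      using exp_total_progeny_approx[OF assms(7) perron] elim assms(14,15) by (simp add: \<rho>_def \<alpha>_def)
    also have "\<dots> \<le> 2 ^ U / a * K"
      using elim assms(2) by (intro mult_left_mono) auto
    finally show ?case .
  qed
  moreover have "\<forall>\<^sub>F k in sequentially. \<alpha> ^ 2 \<le> u k m * v k l"
    using near_1 by eventually_elim
      (use perron_vectors.uv_lower_uniform[OF perron] assms(14,15) in \<open>simp add: \<alpha>_def \<rho>_def\<close>)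
  moreover have "0 < \<alpha> ^ 2" using \<open>0 < \<alpha>\<close> by simp
  ultimately have "(\<lambda>k. exp_total_progeny d (f k) m (nn k) l / ((\<Sum>j\<le>nn k. \<rho> k ^ j) * (u k m * v k l))) \<longlonglongrightarrow> 1"
    by (intro ratio_tendsto_1_of_bounded_error geometric_sums_tendsto_top[OF assms(6) \<rho>_lim])
  moreover have "(\<Sum>j\<le>nn k. \<rho> k ^ j) = (1 - \<rho> k ^ (nn k + 1)) / (1 - \<rho> k)" for k
    using assms(9) by (simp add: \<rho>_def sum_gp0)
  ultimately show ?thesis
    by (simp add: \<rho>_def mult.assoc)
qed

end
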